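(* Let $(W,S)$ be a Coxeter system with $S$ finite, $\phi:\operatorname{Ad}(Q_W)\to W$ the homomorphism $e_x\mapsto x$, and $C_W=\ker\phi$. Then the central extension $1\to C_W\to\operatorname{Ad}(Q_W)\xrightarrow{\phi}W\to1$ is nontrivial (i.e. not split as a direct product $C_W\times W$); equivalently its class $u_\phi\in H^2(W,C_W)$ is nonzero.
   Context: A Coxeter system $(W,S)$: $S$ finite, $m:S\times S\to\mathbb{N}\cup\{\infty\}$ with $m(s,s)=1$, $2\le m(s,t)=m(t,s)\le\infty$ for $s\ne t$, $W=\langle s\in S\mid (st)^{m(s,t)}=1\ (m(s,t)<\infty)\rangle$. The Coxeter quandle is $Q_W=\bigcup_{w\in W}w^{-1}Sw$ with $x\ast y=yxy$, and $\operatorname{Ad}(Q_W)=\langle e_x\ (x\in Q_W)\mid e_y^{-1}e_xe_y=e_{x\ast y}\rangle$. $C_W$ is a central subgroup of $\operatorname{Ad}(Q_W)$. *)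

theory Defs
  imports "HOL-Algebra.Group" "HOL-Library.Extended_Nat"
begin

text \<open>Words over generators: (x, True) is the generator x, (x, False) its inverse.\<close>
type_synonym 'g word = "('g \<times> bool) list"

inductive pres_step :: "'g word set \<Rightarrow> 'g word \<Rightarrow> 'g word \<Rightarrow> bool" for R where
  cancel: "pres_step R (u @ v) (u @ [(x, b), (x, \<not> b)] @ v)"
| rel: "r \<in> R \<Longrightarrow> pres_step R (u @ v) (u @ r @ v)"

definition pres_eq :: "'g word set \<Rightarrow> 'g word \<Rightarrow> 'g word \<Rightarrow> bool" where
  "pres_eq R = (\<lambda>u v. pres_step R u v \<or> pres_step R v u)\<^sup>*\<^sup>*"

definition pres_class :: "'g word set \<Rightarrow> 'g word \<Rightarrow> 'g word set" where
  "pres_class R w = {w'. pres_eq R w w'}"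

definition presented_group :: "'g set \<Rightarrow> 'g word set \<Rightarrow> 'g word set monoid" where
  "presented_group X R =
     \<lparr> carrier = pres_class R ` lists (X \<times> UNIV),
       mult = (\<lambda>A B. pres_class R ((SOME a. a \<in> A) @ (SOME b. b \<in> B))),
       one = pres_class R [] \<rparr>"

definition pres_gen :: "'g word set \<Rightarrow> 'g \<Rightarrow> 'g word set" where
  "pres_gen R x = pres_class R [(x, True)]"

definition coxeter_matrix :: "'a set \<Rightarrow> ('a \<Rightarrow> 'a \<Rightarrow> enat) \<Rightarrow> bool" where
  "coxeter_matrix S m \<longleftrightarrow>
     (\<forall>s\<in>S. m s s = 1) \<and>
     (\<forall>s\<in>S. \<forall>t\<in>S. m s t = m t s \<and> (s \<noteq> t \<longrightarrow> 2 \<le> m s t))"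

definition coxeter_relators :: "'a set \<Rightarrow> ('a \<Rightarrow> 'a \<Rightarrow> enat) \<Rightarrow> 'a word set" where
  "coxeter_relators S m =
     {concat (replicate k [(s, True), (t, True)]) | s t k. s \<in> S \<and> t \<in> S \<and> m s t = enat k}"

definition coxeter_group :: "'a set \<Rightarrow> ('a \<Rightarrow> 'a \<Rightarrow> enat) \<Rightarrow> 'a word set monoid" where
  "coxeter_group S m = presented_group S (coxeter_relators S m)"

definition coxeter_gen :: "'a set \<Rightarrow> ('a \<Rightarrow> 'a \<Rightarrow> enat) \<Rightarrow> 'a \<Rightarrow> 'a word set" where
  "coxeter_gen S m s = pres_gen (coxeter_relators S m) s"

definition coxeter_quandle :: "'a set \<Rightarrow> ('a \<Rightarrow> 'a \<Rightarrow> enat) \<Rightarrow> 'a word set set" where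
  "coxeter_quandle S m =
     {inv\<^bsub>coxeter_group S m\<^esub> w \<otimes>\<^bsub>coxeter_group S m\<^esub> coxeter_gen S m s
        \<otimes>\<^bsub>coxeter_group S m\<^esub> w | w s. w \<in> carrier (coxeter_group S m) \<and> s \<in> S}"

definition quandle_op :: "'a set \<Rightarrow> ('a \<Rightarrow> 'a \<Rightarrow> enat) \<Rightarrow> 'a word set \<Rightarrow> 'a word set \<Rightarrow> 'a word set" where
  "quandle_op S m x y = y \<otimes>\<^bsub>coxeter_group S m\<^esub> x \<otimes>\<^bsub>coxeter_group S m\<^esub> y"

definition adjoint_relators :: "'a set \<Rightarrow> ('a \<Rightarrow> 'a \<Rightarrow> enat) \<Rightarrow> 'a word set word set" where
  "adjoint_relators S m =
     {[(y, False), (x, True), (y, True), (quandle_op S m x y, False)] | x y.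
        x \<in> coxeter_quandle S m \<and> y \<in> coxeter_quandle S m}"

definition adjoint_group :: "'a set \<Rightarrow> ('a \<Rightarrow> 'a \<Rightarrow> enat) \<Rightarrow> 'a word set word set monoid" where
  "adjoint_group S m = presented_group (coxeter_quandle S m) (adjoint_relators S m)"

definition adjoint_gen :: "'a set \<Rightarrow> ('a \<Rightarrow> 'a \<Rightarrow> enat) \<Rightarrow> 'a word set \<Rightarrow> 'a word set word set" where
  "adjoint_gen S m x = pres_gen (adjoint_relators S m) x"

end

(*
  Counting exponents of a word gives a degree homomorphism Ad(Q_W) -> Z, since every relator
  e_y^-1 e_x e_y e_(x*y)^-1 has degree 0; the Coxeter relators (st)^k have even length, so the
  same count mod 2 is a sign character of W.  Every element of Q_W, being conjugate to a
  generator, has sign -1, hence the sign of phi(a) is the parity of the degree of a.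
  A section sigma of phi would send an involution s in S to an element of order at most 2 in
  Ad(Q_W), whose degree must vanish in the torsion-free group Z; then s = phi(sigma s) would
  have even sign.
*)
theory Submission
  imports Defs "HOL-Algebra.Elementary_Groups"
begin

lemma pres_eq_equivclp: "pres_eq R = equivclp (pres_step R)"
  unfolding pres_eq_def equivclp_def symclp_def[abs_def] ..

lemma pres_step_append_context:
  "pres_step R a b \<Longrightarrow> pres_step R (c @ a @ d) (c @ b @ d)"
proof (induction rule: pres_step.induct)
  case (cancel u v x b)
  show ?case using pres_step.cancel[of R "c @ u" "v @ d" x b] by simp
next
  case (rel r u v)
  show ?case using pres_step.rel[OF rel, of "c @ u" "v @ d"] by simp
qed

lemma pres_eq_append_context: "pres_eq R a b \<Longrightarrow> pres_eq R (c @ a @ d) (c @ b @ d)"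
  unfolding pres_eq_equivclp
proof (induction rule: equivclp_induct)
  case (step y z)
  from step(2) have "pres_step R (c @ y @ d) (c @ z @ d) \<or> pres_step R (c @ z @ d) (c @ y @ d)"
    using pres_step_append_context by blast
  with step(3) show ?case by (rule equivclp_into_equivclp)
qed simp

lemma pres_eq_append: "pres_eq R a b \<Longrightarrow> pres_eq R c d \<Longrightarrow> pres_eq R (a @ c) (b @ d)"
  using pres_eq_append_context[of R a b "[]" c] pres_eq_append_context[of R c d b "[]"]
  by (simp add: pres_eq_equivclp equivclp_trans)

lemma pres_eq_cancel: "pres_eq R [(x, b), (x, \<not> b)] []"
  using pres_step.cancel[of R "[]" "[]" x b] by (auto simp: pres_eq_equivclp)

lemma pres_eq_relator: "r \<in> R \<Longrightarrow> pres_eq R r []"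
  using pres_step.rel[of r R "[]" "[]"] by (auto simp: pres_eq_equivclp)

lemma pres_class_eq_iff: "pres_class R a = pres_class R b \<longleftrightarrow> pres_eq R a b"
proof
  assume "pres_class R a = pres_class R b"
  then have "b \<in> pres_class R a" by (simp add: pres_class_def pres_eq_equivclp)
  then show "pres_eq R a b" by (simp add: pres_class_def)
qed (auto simp: pres_class_def pres_eq_equivclp intro: equivclp_trans equivclp_sym)

lemma pres_eq_some_pres_class: "pres_eq R (SOME v. v \<in> pres_class R w) w"
proof -
  have "(SOME v. v \<in> pres_class R w) \<in> pres_class R w"
    by (rule someI[of _ w]) (simp add: pres_class_def pres_eq_equivclp)
  then show ?thesis by (simp add: pres_class_def pres_eq_equivclp equivclp_sym)
qed

lemma mult_presented_group:
  "pres_class R a \<otimes>\<^bsub>presented_group X R\<^esub> pres_class R b = pres_class R (a @ b)"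
  by (simp add: presented_group_def pres_class_eq_iff pres_eq_append pres_eq_some_pres_class)

lemma one_presented_group: "\<one>\<^bsub>presented_group X R\<^esub> = pres_class R []"
  by (simp add: presented_group_def)

lemma carrier_presented_group:
  "carrier (presented_group X R) = pres_class R ` lists (X \<times> UNIV)"
  by (simp add: presented_group_def)

lemma pres_class_in_carrier:
  "w \<in> lists (X \<times> UNIV) \<Longrightarrow> pres_class R w \<in> carrier (presented_group X R)"
  by (simp add: carrier_presented_group)

definition word_inverse :: "'g word \<Rightarrow> 'g word" where
  "word_inverse w = rev (map (\<lambda>(x, b). (x, \<not> b)) w)"

lemma pres_eq_word_inverse: "pres_eq R (word_inverse w @ w) []"
proof (induction w rule: rev_induct)
  case (snoc l w)
  obtain x b where l: "l = (x, b)" by force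
  have "pres_eq R ([(x, \<not> b)] @ (word_inverse w @ w) @ [(x, b)]) ([(x, \<not> b)] @ [] @ [(x, b)])"
    by (rule pres_eq_append_context[OF snoc])
  then show ?case
    using pres_eq_cancel[of R x "\<not> b"]
    by (simp add: word_inverse_def l pres_eq_equivclp equivclp_trans)
qed (simp add: word_inverse_def pres_eq_equivclp)

lemma group_presented_group: "group (presented_group X R)"
proof (rule groupI)
  fix A assume "A \<in> carrier (presented_group X R)"
  then obtain w where w: "w \<in> lists (X \<times> UNIV)" "A = pres_class R w"
    by (auto simp: carrier_presented_group)
  have "pres_class R (word_inverse w) \<in> carrier (presented_group X R)"
    using w(1) by (intro pres_class_in_carrier) (auto simp: word_inverse_def)
  moreover have "pres_class R (word_inverse w) \<otimes>\<^bsub>presented_group X R\<^esub> A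
      = \<one>\<^bsub>presented_group X R\<^esub>"
    by (simp add: w(2) mult_presented_group one_presented_group pres_class_eq_iff
        pres_eq_word_inverse)
  ultimately show "\<exists>B\<in>carrier (presented_group X R). B \<otimes>\<^bsub>presented_group X R\<^esub> A
      = \<one>\<^bsub>presented_group X R\<^esub>"
    by blast
next
  fix A B
  assume "A \<in> carrier (presented_group X R)" "B \<in> carrier (presented_group X R)"
  then show "A \<otimes>\<^bsub>presented_group X R\<^esub> B \<in> carrier (presented_group X R)"
    by (auto simp: carrier_presented_group mult_presented_group intro!: imageI; fastforce)
qed (auto simp: carrier_presented_group mult_presented_group one_presented_group
      intro: pres_class_in_carrier)

lemma pres_gen_in_carrier: "x \<in> X \<Longrightarrow> pres_gen R x \<in> carrier (presented_group X R)"
  by (simp add: pres_gen_def pres_class_in_carrier)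

lemma inv_pres_gen:
  assumes "x \<in> X"
  shows "inv\<^bsub>presented_group X R\<^esub> pres_gen R x = pres_class R [(x, False)]"
proof (rule group.inv_equality[OF group_presented_group])
  show "pres_class R [(x, False)] \<otimes>\<^bsub>presented_group X R\<^esub> pres_gen R x
      = \<one>\<^bsub>presented_group X R\<^esub>"
    using pres_eq_cancel[of R x False]
    by (simp add: pres_gen_def mult_presented_group one_presented_group pres_class_eq_iff)
qed (use assms in \<open>simp_all add: pres_gen_in_carrier pres_class_in_carrier\<close>)

lemma presented_group_hom_eqI:
  assumes "group H"
    and f: "f \<in> hom (presented_group X R) H" and g: "g \<in> hom (presented_group X R) H"
    and gens: "\<And>x. x \<in> X \<Longrightarrow> f (pres_gen R x) = g (pres_gen R x)"
    and A: "A \<in> carrier (presented_group X R)"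
  shows "f A = g A"
proof -
  interpret G: group "presented_group X R" by (rule group_presented_group)
  interpret f: group_hom "presented_group X R" H f
    using assms group_presented_group by (simp add: group_hom_def group_hom_axioms_def)
  interpret g: group_hom "presented_group X R" H g
    using assms group_presented_group by (simp add: group_hom_def group_hom_axioms_def)
  have "f (pres_class R w) = g (pres_class R w)" if "w \<in> lists (X \<times> UNIV)" for w
    using that
  proof (induction w)
    case Nil
    show ?case using f.hom_one g.hom_one by (simp add: one_presented_group)
  next
    case (Cons l w)
    obtain x b where l: "l = (x, b)" by force
    have x: "x \<in> X" and w: "w \<in> lists (X \<times> UNIV)" using Cons.hyps l by auto
    have letter: "f (pres_class R [l]) = g (pres_class R [l])"
    proof (cases b)
      case True
      then show ?thesis using gens[OF x] by (simp add: l pres_gen_def)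
    next
      case False
      then show ?thesis
        using gens[OF x] pres_gen_in_carrier[OF x] by (simp add: l inv_pres_gen[OF x, symmetric])
    qed
    have "pres_class R (l # w) = pres_class R [l] \<otimes>\<^bsub>presented_group X R\<^esub> pres_class R w"
      by (simp add: mult_presented_group)
    moreover have "pres_class R [l] \<in> carrier (presented_group X R)"
      and "pres_class R w \<in> carrier (presented_group X R)"
      using x w by (auto simp: l intro: pres_class_in_carrier)
    ultimately show ?case using letter Cons.IH by simp
  qed
  with A show ?thesis by (auto simp: carrier_presented_group)
qed

definition word_degree :: "'g word \<Rightarrow> int" where
  "word_degree w = (\<Sum>(x, b) \<leftarrow> w. if b then 1 else -1)"

lemma word_degree_append [simp]: "word_degree (u @ v) = word_degree u + word_degree v"
  by (simp add: word_degree_def)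

lemma word_degree_pres_eq_mod:
  assumes R: "\<And>r. r \<in> R \<Longrightarrow> int d dvd word_degree r" and "pres_eq R u v"
  shows "word_degree u mod int d = word_degree v mod int d"
proof -
  have step: "word_degree u mod int d = word_degree v mod int d" if "pres_step R u v" for u v
    using that
  proof (induction rule: pres_step.induct)
    case (rel r u v)
    then have "word_degree r mod int d = 0" using R by simp
    then show ?case by (metis word_degree_append add.commute mod_add_right_eq add_0)
  qed (simp add: word_degree_def)
  from \<open>pres_eq R u v\<close> show ?thesis
    unfolding pres_eq_equivclp by (induction rule: equivclp_induct) (auto dest: step)
qed

text \<open>Since \<open>k mod 0 = k\<close>, \<open>class_degree 0\<close> is the integer degree of a class.\<close>
definition class_degree :: "nat \<Rightarrow> 'g word set \<Rightarrow> int" where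
  "class_degree d A = word_degree (SOME w. w \<in> A) mod int d"

lemma class_degree_pres_class:
  assumes "\<And>r. r \<in> R \<Longrightarrow> int d dvd word_degree r"
  shows "class_degree d (pres_class R w) = word_degree w mod int d"
  using word_degree_pres_eq_mod[OF assms pres_eq_some_pres_class] by (simp add: class_degree_def)

lemma class_degree_hom:
  assumes "\<And>r. r \<in> R \<Longrightarrow> int d dvd word_degree r"
  shows "class_degree d \<in> hom (presented_group X R) (integer_mod_group d)"
proof (rule homI)
  fix A assume "A \<in> carrier (presented_group X R)"
  then show "class_degree d A \<in> carrier (integer_mod_group d)"
    by (auto simp: carrier_integer_mod_group class_degree_def)
next
  fix A B
  assume "A \<in> carrier (presented_group X R)" "B \<in> carrier (presented_group X R)"
  then show "class_degree d (A \<otimes>\<^bsub>presented_group X R\<^esub> B)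
      = class_degree d A \<otimes>\<^bsub>integer_mod_group d\<^esub> class_degree d B"
    by (auto simp: carrier_presented_group mult_presented_group
        class_degree_pres_class[OF assms] mod_add_eq)
qed

lemma integer_hom_involution:
  assumes "group G" "f \<in> hom G (integer_mod_group 0)"
    and "a \<in> carrier G" "a \<otimes>\<^bsub>G\<^esub> a = \<one>\<^bsub>G\<^esub>"
  shows "f a = 0"
proof -
  have "f a + f a = f \<one>\<^bsub>G\<^esub>" using hom_mult[OF assms(2,3,3)] assms(4) by simp
  also have "\<dots> = 0" using hom_one[OF assms(2,1)] by simp
  finally show ?thesis by simp
qed

lemma class_degree_mod: "class_degree d A = class_degree 0 A mod int d"
  by (simp add: class_degree_def)

lemma coxeter_relators_even_degree:
  "r \<in> coxeter_relators S m \<Longrightarrow> int 2 dvd word_degree r"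
proof -
  have "word_degree (concat (replicate k [(s, True), (t, True)])) = 2 * int k" for s t :: 'a and k
    by (induction k) (simp_all add: word_degree_def)
  then show "r \<in> coxeter_relators S m \<Longrightarrow> int 2 dvd word_degree r"
    by (auto simp: coxeter_relators_def)
qed

lemma adjoint_relators_degree: "r \<in> adjoint_relators S m \<Longrightarrow> word_degree r = 0"
  by (auto simp: adjoint_relators_def word_degree_def)

lemma group_comm_hom_conj:
  assumes "group G" "comm_group H" "f \<in> hom G H" "w \<in> carrier G" "g \<in> carrier G"
  shows "f (inv\<^bsub>G\<^esub> w \<otimes>\<^bsub>G\<^esub> g \<otimes>\<^bsub>G\<^esub> w) = f g"
proof -
  interpret H: comm_group H by fact
  interpret f: group_hom G H f
    using assms by (simp add: group_hom_def group_hom_axioms_def H.group_axioms)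
  have "f (inv\<^bsub>G\<^esub> w \<otimes>\<^bsub>G\<^esub> g \<otimes>\<^bsub>G\<^esub> w) = inv\<^bsub>H\<^esub> f w \<otimes>\<^bsub>H\<^esub> f g \<otimes>\<^bsub>H\<^esub> f w"
    using assms(4,5) by simp
  also have "\<dots> = f g"
    using assms(4,5) by (simp add: H.m_comm[of "inv\<^bsub>H\<^esub> f w"] H.m_assoc)
  finally show ?thesis .
qed

lemma coxeter_gen_square:
  assumes "coxeter_matrix S m" "s \<in> S"
  shows "coxeter_gen S m s \<otimes>\<^bsub>coxeter_group S m\<^esub> coxeter_gen S m s = \<one>\<^bsub>coxeter_group S m\<^esub>"
proof -
  have "m s s = enat 1"
    using assms by (simp add: coxeter_matrix_def one_enat_def)
  then have "[(s, True), (s, True)] \<in> coxeter_relators S m"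
    unfolding coxeter_relators_def using assms(2)
    by (intro CollectI exI[of _ s] exI[of _ s] exI[of _ 1]) simp
  then show ?thesis
    by (simp add: coxeter_group_def coxeter_gen_def pres_gen_def mult_presented_group
        one_presented_group pres_class_eq_iff pres_eq_relator)
qed

lemma group_coxeter_group: "group (coxeter_group S m)"
  by (simp add: coxeter_group_def group_presented_group)

lemma group_adjoint_group: "group (adjoint_group S m)"
  by (simp add: adjoint_group_def group_presented_group)

lemma coxeter_parity_hom:
  "class_degree 2 \<in> hom (coxeter_group S m) (integer_mod_group 2)"
  unfolding coxeter_group_def by (rule class_degree_hom) (rule coxeter_relators_even_degree)

lemma adjoint_degree_hom:
  "class_degree d \<in> hom (adjoint_group S m) (integer_mod_group d)"
  unfolding adjoint_group_def by (rule class_degree_hom) (simp add: adjoint_relators_degree)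

lemma coxeter_gen_in_carrier:
  "s \<in> S \<Longrightarrow> coxeter_gen S m s \<in> carrier (coxeter_group S m)"
  by (simp add: coxeter_group_def coxeter_gen_def pres_gen_in_carrier)

lemma coxeter_parity_class:
  "class_degree 2 (pres_class (coxeter_relators S m) w) = word_degree w mod 2"
  using class_degree_pres_class[OF coxeter_relators_even_degree] by simp

lemma adjoint_degree_class:
  "class_degree d (pres_class (adjoint_relators S m) w) = word_degree w mod int d"
  by (rule class_degree_pres_class) (simp add: adjoint_relators_degree)

lemma coxeter_parity_gen: "class_degree 2 (coxeter_gen S m s) = 1"
  by (simp add: coxeter_gen_def pres_gen_def coxeter_parity_class word_degree_def)

lemma coxeter_parity_quandle:
  assumes "x \<in> coxeter_quandle S m"
  shows "class_degree 2 x = 1"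
proof -
  from assms obtain w s where x: "x = inv\<^bsub>coxeter_group S m\<^esub> w \<otimes>\<^bsub>coxeter_group S m\<^esub>
      coxeter_gen S m s \<otimes>\<^bsub>coxeter_group S m\<^esub> w"
    and w: "w \<in> carrier (coxeter_group S m)" and s: "s \<in> S"
    unfolding coxeter_quandle_def by blast
  show ?thesis
    unfolding x group_comm_hom_conj[OF group_coxeter_group abelian_integer_mod_group
        coxeter_parity_hom w coxeter_gen_in_carrier[OF s]]
    by (rule coxeter_parity_gen)
qed

lemma adjoint_parity_hom_compose:
  assumes \<phi>: "\<phi> \<in> hom (adjoint_group S m) (coxeter_group S m)"
    and gens: "\<forall>x \<in> coxeter_quandle S m. \<phi> (adjoint_gen S m x) = x"
    and A: "A \<in> carrier (adjoint_group S m)"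
  shows "class_degree 2 (\<phi> A) = class_degree 2 A"
proof -
  have "(class_degree 2 \<circ> \<phi>) A = class_degree 2 A"
  proof (rule presented_group_hom_eqI[OF group_integer_mod_group])
    show "class_degree 2 \<circ> \<phi> \<in> hom (presented_group (coxeter_quandle S m) (adjoint_relators S m))
        (integer_mod_group 2)"
      using hom_compose[OF \<phi> coxeter_parity_hom] by (simp add: adjoint_group_def)
    show "class_degree 2 \<in> hom (presented_group (coxeter_quandle S m) (adjoint_relators S m))
        (integer_mod_group 2)"
      using adjoint_degree_hom by (simp add: adjoint_group_def)
    show "A \<in> carrier (presented_group (coxeter_quandle S m) (adjoint_relators S m))"
      using A by (simp add: adjoint_group_def)
  next
    fix x assume x: "x \<in> coxeter_quandle S m"
    then have "\<phi> (pres_gen (adjoint_relators S m) x) = x"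
      using gens by (simp add: adjoint_gen_def)
    moreover have "class_degree 2 (pres_gen (adjoint_relators S m) x) = 1"
      by (simp add: pres_gen_def adjoint_degree_class word_degree_def)
    ultimately show "(class_degree 2 \<circ> \<phi>) (pres_gen (adjoint_relators S m) x)
        = class_degree 2 (pres_gen (adjoint_relators S m) x)"
      using coxeter_parity_quandle[OF x] by simp
  qed
  then show ?thesis by simp
qed

theorem lemma4p1:
  fixes S :: "'a set" and m :: "'a \<Rightarrow> 'a \<Rightarrow> enat"
    and \<phi> :: "'a word set word set \<Rightarrow> 'a word set"
  assumes "finite S" and "S \<noteq> {}" and "coxeter_matrix S m"
    and "\<phi> \<in> hom (adjoint_group S m) (coxeter_group S m)"
    and "\<forall>x \<in> coxeter_quandle S m. \<phi> (adjoint_gen S m x) = x"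
  shows "\<not> (\<exists>\<sigma> \<in> hom (coxeter_group S m) (adjoint_group S m).
              \<forall>w \<in> carrier (coxeter_group S m). \<phi> (\<sigma> w) = w)"
proof
  assume "\<exists>\<sigma> \<in> hom (coxeter_group S m) (adjoint_group S m).
              \<forall>w \<in> carrier (coxeter_group S m). \<phi> (\<sigma> w) = w"
  then obtain \<sigma> where \<sigma>: "\<sigma> \<in> hom (coxeter_group S m) (adjoint_group S m)"
    and splits: "\<forall>w \<in> carrier (coxeter_group S m). \<phi> (\<sigma> w) = w" by blast
  obtain s where s: "s \<in> S" using \<open>S \<noteq> {}\<close> by blast
  define g where "g = coxeter_gen S m s"
  have g: "g \<in> carrier (coxeter_group S m)" using s by (simp add: g_def coxeter_gen_in_carrier)
  have \<sigma>g: "\<sigma> g \<in> carrier (adjoint_group S m)" using hom_in_carrier[OF \<sigma> g] .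
  have "\<sigma> g \<otimes>\<^bsub>adjoint_group S m\<^esub> \<sigma> g = \<one>\<^bsub>adjoint_group S m\<^esub>"
    using hom_mult[OF \<sigma> g g] hom_one[OF \<sigma>] coxeter_gen_square[OF \<open>coxeter_matrix S m\<close> s]
    by (simp add: g_def group_coxeter_group group_adjoint_group)
  then have "class_degree 0 (\<sigma> g) = 0"
    by (rule integer_hom_involution[OF group_adjoint_group adjoint_degree_hom \<sigma>g])
  then have "class_degree 2 (\<sigma> g) = 0"
    by (simp add: class_degree_mod[of 2])
  moreover have "class_degree 2 (\<sigma> g) = class_degree 2 g"
    using adjoint_parity_hom_compose[OF assms(4,5) \<sigma>g] splits g by simp
  ultimately show False by (simp add: g_def coxeter_parity_gen)
qed

end
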